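(* Let $\epsilon_0,\epsilon_\theta\in[0,1]$ and $\theta\in\mathbb R$. If $\epsilon_0+\epsilon_\theta\ge 1$, then $\mathsf Q_0^{\rm prono}$ (noise $\epsilon_0$) and $\mathsf Q_\theta^{\rm prono}$ (noise $\epsilon_\theta$) are jointly measurable.
   Context: All operators act on $\mathbb C^2$. For $\varphi\in\mathbb R$ and noise $\delta\in[0,1]$, the noisy projected quadrature POVM on Borel sets $X\subseteq\mathbb R$ is $$\mathsf Q_\varphi^{\rm prono}(X)=\int_X\begin{pmatrix}1&(1-\delta)\sqrt2\,x\,e^{-i\varphi}\\(1-\delta)\sqrt2\,x\,e^{i\varphi}&(1-\delta)2x^2+\delta\end{pmatrix}\frac{e^{-x^2}\,dx}{\sqrt\pi}.$$ Two POVMs $\mathsf E$, $\mathsf B$ on $\mathbb R$ are jointly measurable if there is a POVM $\mathsf G$ on $\mathbb R^2$ with $\mathsf G(X\times\mathbb R)=\mathsf E(X)$ and $\mathsf G(\mathbb R\times Y)=\mathsf B(Y)$ for all Borel $X,Y$. *)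

theory Defs
  imports "HOL-Analysis.Analysis"
begin

text \<open>2x2 complex matrices are modelled as complex^2^2 (rows indexed first).
  The index type 2 has the two elements 1 and 0 (=2); row/column 1 is the first one.\<close>

definition mat2 :: "complex \<Rightarrow> complex \<Rightarrow> complex \<Rightarrow> complex \<Rightarrow> complex^2^2" where
  "mat2 a b c d = (\<chi> i j. if i = 1 then (if j = 1 then a else b) else (if j = 1 then c else d))"

definition psd :: "complex^2^2 \<Rightarrow> bool" where
  "psd A \<longleftrightarrow> (\<forall>v::complex^2. Im (\<Sum>i\<in>UNIV. cnj (v $ i) * (A *v v) $ i) = 0
                              \<and> 0 \<le> Re (\<Sum>i\<in>UNIV. cnj (v $ i) * (A *v v) $ i))"

definition povm :: "'a measure \<Rightarrow> ('a set \<Rightarrow> complex^2^2) \<Rightarrow> bool" where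
  "povm M E \<longleftrightarrow>
     (\<forall>X\<in>sets M. psd (E X)) \<and> E (space M) = mat 1 \<and>
     (\<forall>A::nat \<Rightarrow> 'a set. range A \<subseteq> sets M \<longrightarrow> disjoint_family A \<longrightarrow>
        (\<lambda>n. E (A n)) sums E (\<Union>n. A n))"

definition jointly_measurable :: "(real set \<Rightarrow> complex^2^2) \<Rightarrow> (real set \<Rightarrow> complex^2^2) \<Rightarrow> bool" where
  "jointly_measurable E B \<longleftrightarrow>
     (\<exists>G :: (real \<times> real) set \<Rightarrow> complex^2^2.
        povm (borel :: (real \<times> real) measure) G \<and>
        (\<forall>X\<in>sets (borel :: real measure). G (X \<times> UNIV) = E X) \<and>
        (\<forall>Y\<in>sets (borel :: real measure). G (UNIV \<times> Y) = B Y))"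

definition qdens :: "real \<Rightarrow> real \<Rightarrow> real \<Rightarrow> complex^2^2" where
  "qdens \<delta> \<phi> x = (exp (- x\<^sup>2) / sqrt pi) *\<^sub>R
     mat2 1
          (complex_of_real ((1 - \<delta>) * sqrt 2 * x) * exp (- \<i> * complex_of_real \<phi>))
          (complex_of_real ((1 - \<delta>) * sqrt 2 * x) * exp (\<i> * complex_of_real \<phi>))
          (complex_of_real ((1 - \<delta>) * 2 * x\<^sup>2 + \<delta>))"

definition Qprono :: "real \<Rightarrow> real \<Rightarrow> real set \<Rightarrow> complex^2^2" where
  "Qprono \<delta> \<phi> X = (LINT x:X|lborel. qdens \<delta> \<phi> x)"

end

theory Submission
  imports Defs "HOL-Probability.Distributions"
begin

text \<open>With \<open>g(x) = exp(-x\<^sup>2)/\<surd>\<pi>\<close>, the density of the noisy quadrature POVM is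
  \<open>q\<^sub>\<delta>\<^sub>,\<^sub>\<phi>(x) = g(x) ((1 - \<delta>) P\<^sub>\<phi>(x) + \<delta> I)\<close> with \<open>P\<^sub>\<phi>(x)\<close> positive of rank one,
  and \<open>\<integral> g = 1\<close>, \<open>\<integral> q\<^sub>\<delta>\<^sub>,\<^sub>\<phi> = I\<close>. Hence the density
  \<open>g(y) q\<^sub>a\<^sub>,\<^sub>\<phi>(x) + g(x) q\<^sub>b\<^sub>,\<^sub>\<psi>(y) - g(x) g(y) I\<close> on the plane has marginals
  \<open>q\<^sub>a\<^sub>,\<^sub>\<phi>\<close> and \<open>q\<^sub>b\<^sub>,\<^sub>\<psi>\<close>, and it equals
  \<open>g(x) g(y) ((1 - a) P\<^sub>\<phi>(x) + (1 - b) P\<^sub>\<psi>(y) + (a + b - 1) I)\<close>, which is positive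
  semidefinite as soon as \<open>a, b \<le> 1 \<le> a + b\<close>.\<close>

abbreviation gauss :: "real \<Rightarrow> real" where
  "gauss \<equiv> normal_density 0 (1 / sqrt 2)"

lemma gauss_eq: "gauss x = exp (- x\<^sup>2) / sqrt pi"
  by (simp add: normal_density_def power_divide)

lemma gauss_nonneg: "0 \<le> gauss x"
  by (rule normal_density_nonneg)

lemma has_bochner_integral_gauss: "has_bochner_integral lborel gauss 1"
  using normal_moment_even[of "1 / sqrt 2" 0 0] by simp

lemma has_bochner_integral_gauss_first_moment: "has_bochner_integral lborel (\<lambda>x. gauss x * x) 0"
  using normal_moment_odd[of "1 / sqrt 2" 0 0] by simp

lemma has_bochner_integral_gauss_second_moment:
  "has_bochner_integral lborel (\<lambda>x. gauss x * x\<^sup>2) (1 / 2)"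
  using normal_moment_even[of "1 / sqrt 2" 0 1] by (simp add: power_divide)

lemma mat2_nth [simp]:
  "mat2 a b c d $ 1 $ 1 = a" "mat2 a b c d $ 1 $ 2 = b"
  "mat2 a b c d $ 2 $ 1 = c" "mat2 a b c d $ 2 $ 2 = d"
  by (simp_all add: mat2_def)

lemma mat2_eq_iff:
  fixes A B :: "complex^2^2"
  shows "A = B \<longleftrightarrow> A$1$1 = B$1$1 \<and> A$1$2 = B$1$2 \<and> A$2$1 = B$2$1 \<and> A$2$2 = B$2$2"
  by (auto simp: vec_eq_iff forall_2)

lemma mat2_add [simp]: "mat2 a b c d + mat2 a' b' c' d' = mat2 (a + a') (b + b') (c + c') (d + d')"
  by (simp add: mat2_eq_iff)

lemma scaleR_mat2 [simp]: "r *\<^sub>R mat2 a b c d = mat2 (r * a) (r * b) (r * c) (r * d)"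
  by (simp add: mat2_eq_iff scaleR_conv_of_real[where 'a=complex])

lemma mat_1_eq_mat2: "(mat 1 :: complex^2^2) = mat2 1 0 0 1"
  by (simp add: mat2_eq_iff mat_def)

definition qform :: "complex^2 \<Rightarrow> complex^2^2 \<Rightarrow> complex" where
  "qform v A = (\<Sum>i\<in>UNIV. cnj (v $ i) * (A *v v) $ i)"

lemma psd_iff_qform: "psd A \<longleftrightarrow> (\<forall>v. Im (qform v A) = 0 \<and> 0 \<le> Re (qform v A))"
  by (simp add: psd_def qform_def)

lemma bounded_linear_qform: "bounded_linear (qform v)"
  unfolding linear_conv_bounded_linear[symmetric]
  by (rule linearI) (simp_all add: qform_def matrix_vector_mult_def sum.distrib sum_distrib_left
      algebra_simps scaleR_conv_of_real[where 'a=complex])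

lemma qform_mat2:
  "qform v (mat2 a b c d) = cnj (v$1) * (a * v$1 + b * v$2) + cnj (v$2) * (c * v$1 + d * v$2)"
  by (simp add: qform_def sum_2 matrix_vector_mult_def)

lemma qform_mat_1: "qform v (mat 1) = of_real ((norm v)\<^sup>2)"
  by (simp add: qform_def norm_vec_def L2_set_def sum_2 mat_def matrix_vector_mult_def
      complex_norm_square mult.commute del: of_real_power)

lemma psd_scaleR: "0 \<le> r \<Longrightarrow> psd A \<Longrightarrow> psd (r *\<^sub>R A)"
  using linear_scale[OF bounded_linear.linear[OF bounded_linear_qform]]
  by (simp add: psd_iff_qform)

lemma psd_integral:
  fixes f :: "'a \<Rightarrow> complex^2^2"
  assumes f: "integrable M f" and psd: "\<And>x. x \<in> space M \<Longrightarrow> psd (f x)"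
  shows "psd (integral\<^sup>L M f)"
  unfolding psd_iff_qform
proof
  fix v
  have "Im (qform v (integral\<^sup>L M f)) = (\<integral>x. Im (qform v (f x)) \<partial>M)"
    by (rule integral_bounded_linear[symmetric, OF bounded_linear_compose[OF bounded_linear_Im
          bounded_linear_qform] f, unfolded o_def])
  also have "\<dots> = 0"
    using psd by (simp add: psd_iff_qform integral_eq_zero_AE)
  moreover have "Re (qform v (integral\<^sup>L M f)) = (\<integral>x. Re (qform v (f x)) \<partial>M)"
    by (rule integral_bounded_linear[symmetric, OF bounded_linear_compose[OF bounded_linear_Re
          bounded_linear_qform] f, unfolded o_def])
  moreover have "0 \<le> (\<integral>x. Re (qform v (f x)) \<partial>M)"
    using psd by (simp add: psd_iff_qform integral_nonneg_AE)
  ultimately show "Im (qform v (integral\<^sup>L M f)) = 0 \<and> 0 \<le> Re (qform v (integral\<^sup>L M f))"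
    by simp
qed

lemma povm_set_integral:
  fixes f :: "'a \<Rightarrow> complex^2^2"
  assumes f: "integrable M f" and psd: "\<And>x. x \<in> space M \<Longrightarrow> psd (f x)"
    and normalized: "integral\<^sup>L M f = mat 1"
  shows "povm M (\<lambda>Z. LINT x:Z|M. f x)"
  unfolding povm_def
proof (intro conjI ballI allI impI)
  have set_integrable: "set_integrable M Z f" if "Z \<in> sets M" for Z
    unfolding set_integrable_def using that f by (rule integrable_mult_indicator)
  show "psd (LINT x:Z|M. f x)" if "Z \<in> sets M" for Z
    unfolding set_lebesgue_integral_def
  proof (rule psd_integral)
    show "integrable M (\<lambda>x. indicator Z x *\<^sub>R f x)"
      using set_integrable[OF that] by (simp add: set_integrable_def)
    show "psd (indicator Z x *\<^sub>R f x)" if "x \<in> space M" for x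
      using psd[OF that] by (intro psd_scaleR) auto
  qed
  show "(LINT x:space M|M. f x) = mat 1"
    using normalized set_integral_space[OF f] by simp
  fix A :: "nat \<Rightarrow> 'a set"
  assume A: "range A \<subseteq> sets M" and disj: "disjoint_family A"
  have partial_unions: "(\<Union>i<n. A i) \<in> sets M" for n
    using A by (intro sets.finite_UN) auto
  have unions: "(\<Union>n. \<Union>i<n. A i) = (\<Union>n. A n)"
    by blast
  have "(\<lambda>n. LINT x:(\<Union>i<n. A i)|M. f x) \<longlonglongrightarrow> (LINT x:(\<Union>n. A n)|M. f x)"
    unfolding unions[symmetric]
  proof (rule set_integral_cont_up[OF partial_unions])
    show "incseq (\<lambda>n. \<Union>i<n. A i)"
      by (force simp: incseq_def)
    show "set_integrable M (\<Union>n. \<Union>i<n. A i) f"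
      unfolding unions using A by (intro set_integrable) auto
  qed
  moreover have "(LINT x:(\<Union>i<n. A i)|M. f x) = (\<Sum>i<n. LINT x:A i|M. f x)" for n
    by (rule set_integral_finite_Union)
      (use A in \<open>auto intro: set_integrable disjoint_family_on_mono[OF _ disj]\<close>)
  ultimately show "(\<lambda>n. LINT x:A n|M. f x) sums (LINT x:(\<Union>n. A n)|M. f x)"
    unfolding sums_def by simp
qed

lemma povm_cong_sets: "sets M = sets N \<Longrightarrow> povm M E = povm N E"
  unfolding povm_def by (metis sets_eq_imp_space_eq)

lemma (in pair_sigma_finite) integrable_scaleR_product:
  fixes f :: "'a \<Rightarrow> real" and g :: "'b \<Rightarrow> 'c::{banach, second_countable_topology}"
  assumes f: "integrable M1 f" and g: "integrable M2 g"
  shows "integrable (M1 \<Otimes>\<^sub>M M2) (\<lambda>(x, y). f x *\<^sub>R g y)"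
proof (rule Fubini_integrable)
  show "(\<lambda>(x, y). f x *\<^sub>R g y) \<in> borel_measurable (M1 \<Otimes>\<^sub>M M2)"
    using f g by measurable
  have "integrable M1 (\<lambda>x. norm (f x) * (\<integral>y. norm (g y) \<partial>M2))"
    using f by (intro integrable_mult_left integrable_norm)
  then show "integrable M1 (\<lambda>x. \<integral>y. norm ((\<lambda>(x, y). f x *\<^sub>R g y) (x, y)) \<partial>M2)"
    by simp
  show "AE x in M1. integrable M2 (\<lambda>y. (\<lambda>(x, y). f x *\<^sub>R g y) (x, y))"
    using g by simp
qed

lemma (in pair_sigma_finite) set_integral_Times_space:
  fixes f :: "'a \<times> 'b \<Rightarrow> 'c::{banach, second_countable_topology}"
  assumes f: "integrable (M1 \<Otimes>\<^sub>M M2) f" and X: "X \<in> sets M1"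
  shows "(LINT p:X \<times> space M2|M1 \<Otimes>\<^sub>M M2. f p) = (LINT x:X|M1. \<integral>y. f (x, y) \<partial>M2)"
proof -
  have "integrable (M1 \<Otimes>\<^sub>M M2) (\<lambda>p. indicator (X \<times> space M2) p *\<^sub>R f p)"
    using f X by (intro integrable_mult_indicator) auto
  then have "(LINT p:X \<times> space M2|M1 \<Otimes>\<^sub>M M2. f p)
      = (\<integral>x. \<integral>y. indicator (X \<times> space M2) (x, y) *\<^sub>R f (x, y) \<partial>M2 \<partial>M1)"
    unfolding set_lebesgue_integral_def by (rule integral_fst'[symmetric])
  also have "\<dots> = (LINT x:X|M1. \<integral>y. f (x, y) \<partial>M2)"
  proof -
    have "(\<integral>y. indicator (X \<times> space M2) (x, y) *\<^sub>R f (x, y) \<partial>M2)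
        = (\<integral>y. indicator X x *\<^sub>R f (x, y) \<partial>M2)" for x
      by (rule Bochner_Integration.integral_cong) (auto simp: indicator_times)
    then show ?thesis by (simp add: set_lebesgue_integral_def)
  qed
  finally show ?thesis .
qed

lemma (in pair_sigma_finite) set_integral_space_Times:
  fixes f :: "'a \<times> 'b \<Rightarrow> 'c::{banach, second_countable_topology}"
  assumes f: "integrable (M1 \<Otimes>\<^sub>M M2) f" and Y: "Y \<in> sets M2"
  shows "(LINT p:space M1 \<times> Y|M1 \<Otimes>\<^sub>M M2. f p) = (LINT y:Y|M2. \<integral>x. f (x, y) \<partial>M1)"
proof -
  have "integrable (M1 \<Otimes>\<^sub>M M2) (\<lambda>p. indicator (space M1 \<times> Y) p *\<^sub>R f p)"
    using f Y by (intro integrable_mult_indicator) auto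
  then have "(LINT p:space M1 \<times> Y|M1 \<Otimes>\<^sub>M M2. f p)
      = (\<integral>y. \<integral>x. indicator (space M1 \<times> Y) (x, y) *\<^sub>R f (x, y) \<partial>M1 \<partial>M2)"
    unfolding set_lebesgue_integral_def
    using integral_snd[of "\<lambda>x y. indicator (space M1 \<times> Y) (x, y) *\<^sub>R f (x, y)"]
    by (simp add: case_prod_beta')
  also have "\<dots> = (LINT y:Y|M2. \<integral>x. f (x, y) \<partial>M1)"
  proof -
    have "(\<integral>x. indicator (space M1 \<times> Y) (x, y) *\<^sub>R f (x, y) \<partial>M1)
        = (\<integral>x. indicator Y y *\<^sub>R f (x, y) \<partial>M1)" for y
      by (rule Bochner_Integration.integral_cong) (auto simp: indicator_times)
    then show ?thesis by (simp add: set_lebesgue_integral_def)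
  qed
  finally show ?thesis .
qed

lemma qdens_eq_moments:
  "qdens \<delta> \<phi> x = gauss x *\<^sub>R mat2 1 0 0 \<delta>
     + (gauss x * x) *\<^sub>R mat2 0 (of_real ((1 - \<delta>) * sqrt 2) * exp (- \<i> * of_real \<phi>))
                                 (of_real ((1 - \<delta>) * sqrt 2) * exp (\<i> * of_real \<phi>)) 0
     + (gauss x * x\<^sup>2) *\<^sub>R mat2 0 0 0 (2 * (1 - \<delta>))"
  by (simp add: qdens_def gauss_eq mat2_eq_iff field_simps)

lemma has_bochner_integral_qdens: "has_bochner_integral lborel (qdens \<delta> \<phi>) (mat 1)"
proof -
  have "has_bochner_integral lborel (qdens \<delta> \<phi>)
      (1 *\<^sub>R mat2 1 0 0 \<delta>
       + 0 *\<^sub>R mat2 0 (of_real ((1 - \<delta>) * sqrt 2) * exp (- \<i> * of_real \<phi>))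
                   (of_real ((1 - \<delta>) * sqrt 2) * exp (\<i> * of_real \<phi>)) 0
       + (1 / 2) *\<^sub>R mat2 0 0 0 (2 * (1 - \<delta>)))"
    unfolding qdens_eq_moments[abs_def]
    by (intro has_bochner_integral_add has_bochner_integral_scaleR_left
        has_bochner_integral_gauss has_bochner_integral_gauss_first_moment
        has_bochner_integral_gauss_second_moment)
  then show ?thesis
    by (simp add: mat_1_eq_mat2 algebra_simps)
qed

lemma qform_qdens:
  "qform v (qdens \<delta> \<phi> x) = of_real (gauss x *
     ((1 - \<delta>) * (cmod (v$1 + of_real (sqrt 2 * x) * exp (- \<i> * of_real \<phi>) * v$2))\<^sup>2
      + \<delta> * (norm v)\<^sup>2))" (is "_ = ?rhs")
proof -
  define s where "s = complex_of_real (sqrt 2)"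
  define e where "e = exp (\<i> * of_real \<phi>)"
  define w where "w = v$1 + s * of_real x * cnj e * v$2"
  have e: "e * cnj e = 1" by (simp add: e_def exp_cnj flip: exp_add)
  have s: "s * s = 2" by (simp add: s_def flip: of_real_mult)
  have cnj_w: "cnj w = cnj (v$1) + s * of_real x * e * cnj (v$2)"
    by (simp add: w_def s_def)
  have "qform v (qdens \<delta> \<phi> x) = of_real (gauss x) *
      (cnj (v$1) * (v$1 + (1 - of_real \<delta>) * s * of_real x * cnj e * v$2)
       + cnj (v$2) * ((1 - of_real \<delta>) * s * of_real x * e * v$1
                      + ((1 - of_real \<delta>) * 2 * of_real x ^ 2 + of_real \<delta>) * v$2))"
    by (simp add: qdens_def qform_mat2 s_def e_def exp_cnj algebra_simps gauss_eq)
  also have "\<dots> = of_real (gauss x) *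
      ((1 - of_real \<delta>) * (w * cnj w) + of_real \<delta> * (v$1 * cnj (v$1) + v$2 * cnj (v$2)))"
    unfolding cnj_w unfolding w_def using e s by algebra
  also have "\<dots> = ?rhs"
    by (simp add: w_def s_def e_def exp_cnj norm_vec_def L2_set_def sum_2 complex_norm_square
        del: of_real_power)
  finally show ?thesis .
qed

lemma Im_qform_qdens: "Im (qform v (qdens \<delta> \<phi> x)) = 0"
  by (simp add: qform_qdens)

lemma Re_qform_qdens_ge:
  assumes "\<delta> \<le> 1"
  shows "\<delta> * gauss x * (norm v)\<^sup>2 \<le> Re (qform v (qdens \<delta> \<phi> x))"
  using assms by (simp add: qform_qdens distrib_left gauss_nonneg)

definition joint_qdens :: "real \<Rightarrow> real \<Rightarrow> real \<Rightarrow> real \<Rightarrow> real \<times> real \<Rightarrow> complex^2^2" where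
  "joint_qdens a \<phi> b \<psi> =
     (\<lambda>(x, y). gauss y *\<^sub>R qdens a \<phi> x + gauss x *\<^sub>R qdens b \<psi> y - (gauss x * gauss y) *\<^sub>R mat 1)"

lemma psd_joint_qdens:
  assumes "a \<le> 1" "b \<le> 1" "1 \<le> a + b"
  shows "psd (joint_qdens a \<phi> b \<psi> p)"
  unfolding psd_iff_qform
proof
  fix v
  obtain x y where p: "p = (x, y)" by fastforce
  have lin: "linear (qform v)" by (rule bounded_linear.linear[OF bounded_linear_qform])
  have qform_joint: "qform v (joint_qdens a \<phi> b \<psi> p) = gauss y *\<^sub>R qform v (qdens a \<phi> x)
      + gauss x *\<^sub>R qform v (qdens b \<psi> y) - (gauss x * gauss y) *\<^sub>R of_real ((norm v)\<^sup>2)"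
    by (simp add: p joint_qdens_def linear_add[OF lin] linear_diff[OF lin] linear_scale[OF lin]
        qform_mat_1)
  have "0 \<le> (a + b - 1) * (gauss x * gauss y * (norm v)\<^sup>2)"
    using assms by (simp add: gauss_nonneg)
  also have "\<dots> \<le> gauss y * (a * gauss x * (norm v)\<^sup>2) + gauss x * (b * gauss y * (norm v)\<^sup>2)
      - gauss x * gauss y * (norm v)\<^sup>2"
    by (simp add: algebra_simps)
  also have "\<dots> \<le> Re (qform v (joint_qdens a \<phi> b \<psi> p))"
    unfolding qform_joint using assms
    by (simp add: add_mono mult_left_mono gauss_nonneg Re_qform_qdens_ge)
  finally show "Im (qform v (joint_qdens a \<phi> b \<psi> p)) = 0 \<and> 0 \<le> Re (qform v (joint_qdens a \<phi> b \<psi> p))"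
    by (simp add: qform_joint Im_qform_qdens)
qed

lemma integrable_joint_qdens: "integrable (lborel \<Otimes>\<^sub>M lborel) (joint_qdens a \<phi> b \<psi>)"
proof -
  have gauss: "integrable lborel gauss" and qdens: "integrable lborel (qdens \<delta> \<phi>')" for \<delta> \<phi>'
    using has_bochner_integral_gauss has_bochner_integral_qdens by (auto simp: has_bochner_integral_iff)
  have "integrable (lborel \<Otimes>\<^sub>M lborel) (\<lambda>(y, x). gauss y *\<^sub>R qdens a \<phi> x)"
    using gauss qdens by (rule lborel_pair.integrable_scaleR_product)
  from lborel_pair.integrable_product_swap[OF this]
  have "integrable (lborel \<Otimes>\<^sub>M lborel) (\<lambda>(x, y). gauss y *\<^sub>R qdens a \<phi> x)"
    by simp
  moreover have "integrable (lborel \<Otimes>\<^sub>M lborel) (\<lambda>(x, y). gauss x *\<^sub>R qdens b \<psi> y)"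
    using gauss qdens by (rule lborel_pair.integrable_scaleR_product)
  moreover have "integrable (lborel \<Otimes>\<^sub>M lborel) (\<lambda>(x, y). (gauss x * gauss y) *\<^sub>R mat 1)"
    using lborel_pair.integrable_scaleR_product[OF gauss integrable_scaleR_left[OF gauss]]
    unfolding scaleR_scaleR .
  ultimately show ?thesis
    unfolding joint_qdens_def case_prod_unfold
    by (intro Bochner_Integration.integrable_diff Bochner_Integration.integrable_add)
qed

lemma has_bochner_integral_joint_qdens_snd:
  "has_bochner_integral lborel (\<lambda>y. joint_qdens a \<phi> b \<psi> (x, y)) (qdens a \<phi> x)"
proof -
  have "has_bochner_integral lborel (\<lambda>y. joint_qdens a \<phi> b \<psi> (x, y))
      (1 *\<^sub>R qdens a \<phi> x + gauss x *\<^sub>R mat 1 - (gauss x * 1) *\<^sub>R mat 1)"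
    unfolding joint_qdens_def prod.case
    by (intro has_bochner_integral_diff has_bochner_integral_add has_bochner_integral_scaleR_left
        has_bochner_integral_scaleR_right has_bochner_integral_mult_right
        has_bochner_integral_gauss has_bochner_integral_qdens)
  then show ?thesis by simp
qed

lemma has_bochner_integral_joint_qdens_fst:
  "has_bochner_integral lborel (\<lambda>x. joint_qdens a \<phi> b \<psi> (x, y)) (qdens b \<psi> y)"
proof -
  have "has_bochner_integral lborel (\<lambda>x. joint_qdens a \<phi> b \<psi> (x, y))
      (gauss y *\<^sub>R mat 1 + 1 *\<^sub>R qdens b \<psi> y - (1 * gauss y) *\<^sub>R mat 1)"
    unfolding joint_qdens_def prod.case
    by (intro has_bochner_integral_diff has_bochner_integral_add has_bochner_integral_scaleR_left
        has_bochner_integral_scaleR_right has_bochner_integral_mult_left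
        has_bochner_integral_gauss has_bochner_integral_qdens)
  then show ?thesis by simp
qed

lemma integral_joint_qdens: "integral\<^sup>L (lborel \<Otimes>\<^sub>M lborel) (joint_qdens a \<phi> b \<psi>) = mat 1"
proof -
  have "integral\<^sup>L (lborel \<Otimes>\<^sub>M lborel) (joint_qdens a \<phi> b \<psi>)
      = (\<integral>x. \<integral>y. joint_qdens a \<phi> b \<psi> (x, y) \<partial>lborel \<partial>lborel)"
    by (rule lborel_pair.integral_fst'[OF integrable_joint_qdens, symmetric])
  also have "\<dots> = integral\<^sup>L lborel (qdens a \<phi>)"
    by (simp add: has_bochner_integral_integral_eq[OF has_bochner_integral_joint_qdens_snd])
  also have "\<dots> = mat 1"
    by (rule has_bochner_integral_integral_eq[OF has_bochner_integral_qdens])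
  finally show ?thesis .
qed

theorem Qprono_jointly_measurable:
  assumes "a \<le> 1" "b \<le> 1" "1 \<le> a + b"
  shows "jointly_measurable (Qprono a \<phi>) (Qprono b \<psi>)"
  unfolding jointly_measurable_def
proof (intro exI conjI ballI)
  let ?G = "\<lambda>Z. LINT p:Z|lborel \<Otimes>\<^sub>M lborel. joint_qdens a \<phi> b \<psi> p"
  have "sets (lborel \<Otimes>\<^sub>M lborel :: (real \<times> real) measure) = sets borel"
    by (metis borel_prod sets_lborel sets_pair_measure_cong)
  moreover have "povm (lborel \<Otimes>\<^sub>M lborel) ?G"
    using integrable_joint_qdens psd_joint_qdens[OF assms] integral_joint_qdens
    by (rule povm_set_integral)
  ultimately show "povm borel ?G"
    by (metis povm_cong_sets)
  show "?G (X \<times> UNIV) = Qprono a \<phi> X" if "X \<in> sets borel" for X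
    using lborel_pair.set_integral_Times_space[OF integrable_joint_qdens that[folded sets_lborel]]
    unfolding space_lborel space_borel Qprono_def
      has_bochner_integral_integral_eq[OF has_bochner_integral_joint_qdens_snd] .
  show "?G (UNIV \<times> Y) = Qprono b \<psi> Y" if "Y \<in> sets borel" for Y
    using lborel_pair.set_integral_space_Times[OF integrable_joint_qdens that[folded sets_lborel]]
    unfolding space_lborel space_borel Qprono_def
      has_bochner_integral_integral_eq[OF has_bochner_integral_joint_qdens_fst] .
qed

theorem mainTheorem7:
  fixes \<epsilon>0 \<epsilon>\<theta> \<theta> :: real
  assumes "0 \<le> \<epsilon>0" "\<epsilon>0 \<le> 1" "0 \<le> \<epsilon>\<theta>" "\<epsilon>\<theta> \<le> 1"
    and "\<epsilon>0 + \<epsilon>\<theta> \<ge> 1"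
  shows "jointly_measurable (Qprono \<epsilon>0 0) (Qprono \<epsilon>\<theta> \<theta>)"
  using assms by (intro Qprono_jointly_measurable) auto

end
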